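(* Let $m$ be a prime power and let $l,s,t$ be positive integers with $m\geq l-1$ and $2t-1\leq l$, and let $c\geq t$ be an integer with $l=c(t-1)+r$ for some $r\in\{t,\ldots,c\}$. Let $C$ be an $s$-ary $c$-frameproof code of length $l$ over an alphabet $S$ satisfying Property $P(t)$ with special element $\infty$, and put $T=S\setminus\{\infty\}$. Let $\alpha_1,\ldots,\alpha_l$ be distinct elements of $\mathbb{F}_m\cup\{\infty\}$. For a polynomial $f\in\mathbb{F}_m[X]$ let $f_\infty$ denote the coefficient of $X^{t-1}$ in $f$. For each codeword $B=(b_1,\ldots,b_l)\in C$ and each $f\in\mathbb{F}_m[X]$ with $\deg f\leq t-1$, define the word $w(B,f)$ of length $l$ over the alphabet $(T\times\mathbb{F}_m)\cup\{(\infty,\infty)\}$ whose $j$-th entry is $(\infty,\infty)$ if $b_j=\infty$; $(b_j,f_\infty)$ if $b_j\neq\infty$ and $\alpha_j=\infty$; and $(b_j,f(\alpha_j))$ otherwise. Let $C'$ be the set of all such words $w(B,f)$. Then $C'$ is a $c$-frameproof code satisfying Property $P(t)$ with special element $(\infty,\infty)$, and $C'\cup\{(\infty,\infty,\ldots,(\infty,\infty))\}$ (adjoining the word all of whose entries equal $(\infty,\infty)$) is still a $c$-frameproof code.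
   Context: Let $F$ be a finite alphabet and $l$ a positive integer. For $P\subseteq F^l$, $desc(P)=\{x\in F^l: \text{for every } i \text{ there is } y\in P \text{ with } x_i=y_i\}$. For an integer $c\geq 2$, a $c$-frameproof code is a subset $C\subseteq F^l$ with $desc(P)\cap C=P$ for every $P\subseteq C$ with $|P|\leq c$. A code is $s$-ary if its alphabet has size $s$. A $c$-frameproof code $C$ over an alphabet $S$ satisfies Property $P(t)$ if there is a special element $\infty\in S$ such that every codeword has at most $t-1$ coordinates equal to $\infty$ and every codeword is uniquely determined by specifying $t$ of its components not equal to $\infty$ (i.e., if $x,y\in C$ agree in $t$ coordinates where their common value is not $\infty$, then $x=y$). $\mathbb{F}_m$ denotes the finite field of order $m$. *)

theory Defs
  imports Main "HOL-Computational_Algebra.Polynomial"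
begin

text \<open>Words of length l are lists of length l; coordinates are indexed by 0..l-1.\<close>

definition is_code :: "'a set \<Rightarrow> nat \<Rightarrow> 'a list set \<Rightarrow> bool" where
  "is_code S l C \<longleftrightarrow> (\<forall>x\<in>C. length x = l \<and> set x \<subseteq> S)"

definition desc :: "nat \<Rightarrow> 'a list set \<Rightarrow> 'a list set" where
  "desc l P = {x. length x = l \<and> (\<forall>i<l. \<exists>y\<in>P. x ! i = y ! i)}"

definition frameproof :: "nat \<Rightarrow> nat \<Rightarrow> 'a list set \<Rightarrow> bool" where
  "frameproof c l C \<longleftrightarrow>
     (\<forall>P. P \<subseteq> C \<and> finite P \<and> card P \<le> c \<longrightarrow> desc l P \<inter> C = P)"

definition frameproof_code :: "nat \<Rightarrow> 'a set \<Rightarrow> nat \<Rightarrow> 'a list set \<Rightarrow> bool" where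
  "frameproof_code c S l C \<longleftrightarrow> is_code S l C \<and> frameproof c l C"

definition propP :: "nat \<Rightarrow> 'a set \<Rightarrow> nat \<Rightarrow> 'a \<Rightarrow> 'a list set \<Rightarrow> bool" where
  "propP t S l sp C \<longleftrightarrow> sp \<in> S \<and>
     (\<forall>x\<in>C. card {i. i < l \<and> x ! i = sp} \<le> t - 1) \<and>
     (\<forall>x\<in>C. \<forall>y\<in>C. \<forall>I. I \<subseteq> {..<l} \<and> card I = t \<and>
         (\<forall>i\<in>I. x ! i = y ! i \<and> x ! i \<noteq> sp) \<longrightarrow> x = y)"

text \<open>The construction: the element infinity of F_m \<union> {\<infinity>} is None; the new
  special symbol (\<infinity>,\<infinity>) is (sp, None).\<close>

definition cword :: "nat \<Rightarrow> nat \<Rightarrow> 'a \<Rightarrow> (nat \<Rightarrow> 'f::field option) \<Rightarrow> 'a list \<Rightarrow> 'f poly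
                      \<Rightarrow> ('a \<times> 'f option) list" where
  "cword t l sp alpha B f =
     map (\<lambda>j. if B ! j = sp then (sp, None)
              else (case alpha j of None \<Rightarrow> (B ! j, Some (coeff f (t - 1)))
                                  | Some a \<Rightarrow> (B ! j, Some (poly f a)))) [0..<l]"

definition ccode :: "nat \<Rightarrow> nat \<Rightarrow> 'a \<Rightarrow> (nat \<Rightarrow> 'f::field option) \<Rightarrow> 'a list set
                      \<Rightarrow> ('a \<times> 'f option) list set" where
  "ccode t l sp alpha C = {cword t l sp alpha B f | B f. B \<in> C \<and> degree f \<le> t - 1}"

end

theory Submission
  imports Defs
begin

(* A word w(B,f) is determined by any t non-special coordinates: they determine B by Property P(t)
   of C, and they determine f since a polynomial of degree below t is determined by its values at
   t distinct points of the projective line. Any code with Property P(t) and l >= c(t-1) + t is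
   c-frameproof, even with the all-special word adjoined: a descendant x of at most c codewords
   not among them agrees with each in at most t-1 non-special coordinates and has at most t-1
   special coordinates, so it covers at most c(t-1) + t-1 < l coordinates; the all-special word
   gets at most t-1 special coordinates from each parent, hence at most c(t-1) < l. *)

(* None is the point at infinity of the projective line; for polynomials of degree at most k
   the value there is the coefficient of X^k. *)
definition proj_eval :: "nat \<Rightarrow> 'a::comm_ring_1 poly \<Rightarrow> 'a option \<Rightarrow> 'a" where
  "proj_eval k f x = (case x of None \<Rightarrow> coeff f k | Some a \<Rightarrow> poly f a)"

lemma proj_eval_eqI:
  fixes f g :: "'a::idom poly"
  assumes "degree f \<le> k" "degree g \<le> k" "finite X" "k < card X"
    and "\<And>x. x \<in> X \<Longrightarrow> proj_eval k f x = proj_eval k g x"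
  shows "f = g"
proof -
  define A where "A = {a. Some a \<in> X}"
  have agree: "poly f a = poly g a" if "a \<in> A" for a
    using assms(5)[of "Some a"] that by (simp add: A_def proj_eval_def)
  have "finite A"
    using finite_vimageI[OF assms(3), of Some] by (simp add: A_def vimage_def)
  have X_sub: "X \<subseteq> insert None (Some ` A)"
  proof
    fix x assume "x \<in> X"
    then show "x \<in> insert None (Some ` A)" by (cases x) (auto simp: A_def)
  qed
  show ?thesis
  proof (cases "None \<in> X")
    case True
    have "card X \<le> Suc (card A)"
    proof -
      have "card X \<le> card (insert None (Some ` A))"
        using X_sub \<open>finite A\<close> by (intro card_mono) auto
      also have "\<dots> \<le> Suc (card (Some ` A))" by (rule card_insert_le_m1) auto
      finally show ?thesis by (simp add: card_image)
    qed
    show ?thesis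
    proof (rule poly_eqI_degree_lead_coeff[of f k g A])
      show "coeff f k = coeff g k" using assms(5)[OF True] by (simp add: proj_eval_def)
      show "k \<le> card A" using \<open>card X \<le> Suc (card A)\<close> assms(4) by simp
      show "degree f \<le> k" "degree g \<le> k" by (fact assms)+
      show "\<And>z. z \<in> A \<Longrightarrow> poly f z = poly g z" by (fact agree)
    qed
  next
    case False
    then have "X = Some ` A" using X_sub by (auto simp: A_def)
    then have "card A = card X" by (simp add: card_image)
    then show ?thesis using assms agree by (intro poly_eqI_degree[of A]) simp_all
  qed
qed

lemma frameproof_subset:
  assumes "frameproof c l D" "C \<subseteq> D"
  shows "frameproof c l C"
  using assms unfolding frameproof_def by blast

lemma card_le_card_mult_if_in_desc:
  assumes "x \<in> desc l P" "finite P" "A \<subseteq> {..<l}"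
    and "\<And>y. y \<in> P \<Longrightarrow> card {i\<in>A. x ! i = y ! i} \<le> k"
  shows "card A \<le> card P * k"
proof -
  have "A \<subseteq> (\<Union>y\<in>P. {i\<in>A. x ! i = y ! i})"
    using assms(1,3) by (auto simp: desc_def)
  then have "card A \<le> card (\<Union>y\<in>P. {i\<in>A. x ! i = y ! i})"
    using assms(2,3) by (intro card_mono) (auto intro: finite_subset)
  also have "\<dots> \<le> (\<Sum>y\<in>P. card {i\<in>A. x ! i = y ! i})"
    by (rule card_UN_le[OF assms(2)])
  also have "\<dots> \<le> card P * k"
    using sum_bounded_above[of P "\<lambda>y. card {i\<in>A. x ! i = y ! i}" k] assms(4) by simp
  finally show ?thesis .
qed

lemma propP_card_agree_le:
  assumes "propP t S l e D" "x \<in> D" "y \<in> D" "x \<noteq> y"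
  shows "card {i. i < l \<and> x ! i = y ! i \<and> x ! i \<noteq> e} \<le> t - 1"
proof (rule ccontr)
  assume "\<not> ?thesis"
  then have "t \<le> card {i. i < l \<and> x ! i = y ! i \<and> x ! i \<noteq> e}" by simp
  then obtain I where "I \<subseteq> {i. i < l \<and> x ! i = y ! i \<and> x ! i \<noteq> e}" "card I = t"
    by (rule obtain_subset_with_card_n)
  then show False using assms unfolding propP_def by blast
qed

lemma frameproof_insert_replicate:
  assumes P: "propP t S l e D" and len: "\<And>x. x \<in> D \<Longrightarrow> length x = l"
    and "0 < t" and l_ge: "c * (t - 1) + t \<le> l"
  shows "frameproof c l (insert (replicate l e) D)"
  unfolding frameproof_def
proof (intro allI impI)
  fix Q assume "Q \<subseteq> insert (replicate l e) D \<and> finite Q \<and> card Q \<le> c"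
  then have Q: "Q \<subseteq> insert (replicate l e) D" and "finite Q" and "card Q \<le> c" by auto
  have "Q \<subseteq> desc l Q"
    using Q len by (fastforce simp: desc_def)
  moreover have "x \<in> Q" if x: "x \<in> desc l Q" "x \<in> insert (replicate l e) D" for x
  proof (rule ccontr)
    assume "x \<notin> Q"
    have Q_bound: "card Q * (t - 1) \<le> c * (t - 1)" using \<open>card Q \<le> c\<close> by (rule mult_le_mono1)
    consider "x = replicate l e" | "x \<in> D" "x \<noteq> replicate l e" using x(2) by blast
    then show False
    proof cases
      case 1
      have "card {..<l} \<le> card Q * (t - 1)"
      proof (rule card_le_card_mult_if_in_desc[OF x(1) \<open>finite Q\<close> order_refl])
        fix y assume "y \<in> Q"
        then have "y \<in> D" using Q 1 \<open>x \<notin> Q\<close> by auto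
        then have "card {i. i < l \<and> y ! i = e} \<le> t - 1" using P by (simp add: propP_def)
        moreover have "{i\<in>{..<l}. x ! i = y ! i} = {i. i < l \<and> y ! i = e}" using 1 by auto
        ultimately show "card {i\<in>{..<l}. x ! i = y ! i} \<le> t - 1" by simp
      qed
      then have "l \<le> card Q * (t - 1)" by simp
      then show False using Q_bound l_ge \<open>0 < t\<close> by linarith
    next
      case 2
      let ?A = "{i. i < l \<and> x ! i \<noteq> e}"
      have "l = card {..<l}" by simp
      also have "\<dots> \<le> card (?A \<union> {i. i < l \<and> x ! i = e})" by (intro card_mono) auto
      also have "\<dots> \<le> card ?A + card {i. i < l \<and> x ! i = e}" by (rule card_Un_le)
      also have "card {i. i < l \<and> x ! i = e} \<le> t - 1" using P 2 by (simp add: propP_def)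
      finally have l_le: "l \<le> card ?A + (t - 1)" by simp
      have "card ?A \<le> card Q * (t - 1)"
      proof (rule card_le_card_mult_if_in_desc[OF x(1) \<open>finite Q\<close>])
        fix y assume "y \<in> Q"
        show "card {i\<in>?A. x ! i = y ! i} \<le> t - 1"
        proof (cases "y = replicate l e")
          case True
          then have "{i\<in>?A. x ! i = y ! i} = {}" by auto
          then show ?thesis by (simp only: card.empty)
        next
          case False
          then have "y \<in> D" "y \<noteq> x" using Q \<open>y \<in> Q\<close> \<open>x \<notin> Q\<close> by auto
          moreover have "{i\<in>?A. x ! i = y ! i} = {i. i < l \<and> x ! i = y ! i \<and> x ! i \<noteq> e}" by auto
          ultimately show ?thesis using propP_card_agree_le[OF P 2(1)] by simp
        qed
      qed auto
      then show False using Q_bound l_ge l_le \<open>0 < t\<close> by linarith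
    qed
  qed
  ultimately show "desc l Q \<inter> insert (replicate l e) D = Q" using Q by blast
qed

lemma length_cword [simp]: "length (cword t l sp alpha B f) = l"
  by (simp add: cword_def)

lemma nth_cword:
  "i < l \<Longrightarrow> cword t l sp alpha B f ! i =
     (if B ! i = sp then (sp, None) else (B ! i, Some (proj_eval (t - 1) f (alpha i))))"
  by (simp add: cword_def proj_eval_def split: option.split)

lemma is_code_ccode:
  assumes "is_code S l C"
  shows "is_code (((S - {sp}) \<times> Some ` UNIV) \<union> {(sp, None)}) l (ccode t l sp alpha C)"
  unfolding is_code_def
proof
  fix x assume "x \<in> ccode t l sp alpha C"
  then obtain B f where x: "x = cword t l sp alpha B f" and "B \<in> C"
    by (auto simp: ccode_def)
  then have "set B \<subseteq> S" "length B = l" using assms by (auto simp: is_code_def)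
  have "set x \<subseteq> ((S - {sp}) \<times> Some ` UNIV) \<union> {(sp, None)}"
  proof
    fix a assume "a \<in> set x"
    then obtain i where "i < l" "a = x ! i" by (auto simp: x in_set_conv_nth)
    moreover have "B ! i \<in> S" using \<open>set B \<subseteq> S\<close> \<open>length B = l\<close> \<open>i < l\<close> by auto
    ultimately show "a \<in> ((S - {sp}) \<times> Some ` UNIV) \<union> {(sp, None)}" by (simp add: x nth_cword)
  qed
  then show "length x = l \<and> set x \<subseteq> ((S - {sp}) \<times> Some ` UNIV) \<union> {(sp, None)}"
    by (simp add: x)
qed

lemma propP_ccode:
  assumes P: "propP t S l sp C" and inj: "inj_on alpha {..<l}"
    and "0 < t" and "(sp, None) \<in> T"
  shows "propP t T l (sp, None) (ccode t l sp alpha C)"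
proof -
  have special: "card {i. i < l \<and> x ! i = (sp, None)} \<le> t - 1"
    if "x \<in> ccode t l sp alpha C" for x
  proof -
    from that obtain B f where x: "x = cword t l sp alpha B f" and "B \<in> C"
      unfolding ccode_def by blast
    then have "{i. i < l \<and> x ! i = (sp, None)} = {i. i < l \<and> B ! i = sp}"
      by (auto simp: nth_cword split: if_splits)
    then show ?thesis using P \<open>B \<in> C\<close> by (simp add: propP_def)
  qed
  have unique: "x = y"
    if x_in: "x \<in> ccode t l sp alpha C" and y_in: "y \<in> ccode t l sp alpha C"
      and I: "I \<subseteq> {..<l}" "card I = t"
      and agree: "\<forall>i\<in>I. x ! i = y ! i \<and> x ! i \<noteq> (sp, None)" for x y I
  proof -
    obtain B f where x: "x = cword t l sp alpha B f" "B \<in> C" "degree f \<le> t - 1"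
      using x_in by (auto simp: ccode_def)
    obtain B' f' where y: "y = cword t l sp alpha B' f'" "B' \<in> C" "degree f' \<le> t - 1"
      using y_in by (auto simp: ccode_def)
    have agree': "B ! i = B' ! i \<and> B ! i \<noteq> sp \<and>
        proj_eval (t - 1) f (alpha i) = proj_eval (t - 1) f' (alpha i)" if "i \<in> I" for i
    proof -
      have "i < l" using I(1) that by auto
      then show ?thesis
        using agree that by (auto simp: x y nth_cword split: if_splits)
    qed
    have "B = B'"
      using P x(2) y(2) I agree' unfolding propP_def by blast
    moreover have "f = f'"
    proof (rule proj_eval_eqI[OF x(3) y(3)])
      have "inj_on alpha I" using inj_on_subset[OF inj \<open>I \<subseteq> {..<l}\<close>] .
      then show "t - 1 < card (alpha ` I)" using \<open>card I = t\<close> \<open>0 < t\<close> by (simp add: card_image)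
      show "finite (alpha ` I)" using \<open>I \<subseteq> {..<l}\<close> finite_subset by blast
    qed (use agree' in auto)
    ultimately show ?thesis using x(1) y(1) by simp
  qed
  show ?thesis
    unfolding propP_def
  proof (intro conjI ballI allI impI)
    fix x y I
    assume "x \<in> ccode t l sp alpha C" "y \<in> ccode t l sp alpha C"
      and "I \<subseteq> {..<l} \<and> card I = t \<and> (\<forall>i\<in>I. x ! i = y ! i \<and> x ! i \<noteq> (sp, None))"
    then show "x = y" by (intro unique[of x y I]) blast+
  qed (rule \<open>(sp, None) \<in> T\<close>, erule special)
qed

theorem lemma2:
  fixes m l s t c r :: nat
    and S :: "'a set" and sp :: 'a and C :: "'a list set"
    and alpha :: "nat \<Rightarrow> 'f::{finite,field} option"
  assumes "m = card (UNIV :: 'f set)"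
    and "l > 0" and "s > 0" and "t > 0"
    and "m \<ge> l - 1" and "2 * t - 1 \<le> l"
    and "c \<ge> 2" and "c \<ge> t"
    and "t \<le> r" and "r \<le> c" and "l = c * (t - 1) + r"
    and "finite S" and "card S = s"
    and "frameproof_code c S l C"
    and "propP t S l sp C"
    and "inj_on alpha {..<l}"
  shows "frameproof_code c (((S - {sp}) \<times> Some ` UNIV) \<union> {(sp, None)}) l
           (ccode t l sp alpha C)
       \<and> propP t (((S - {sp}) \<times> Some ` UNIV) \<union> {(sp, None)}) l (sp, None)
           (ccode t l sp alpha C)
       \<and> frameproof_code c (((S - {sp}) \<times> Some ` UNIV) \<union> {(sp, None)}) l
           (insert (replicate l (sp, None)) (ccode t l sp alpha C))"
proof -
  let ?T = "((S - {sp}) \<times> Some ` UNIV) \<union> {(sp, None)}"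
  let ?C' = "ccode t l sp alpha C"
  have code: "is_code ?T l ?C'"
    using \<open>frameproof_code c S l C\<close> unfolding frameproof_code_def by (blast intro: is_code_ccode)
  have P: "propP t ?T l (sp, None) ?C'"
    using \<open>propP t S l sp C\<close> \<open>inj_on alpha {..<l}\<close> \<open>t > 0\<close> by (simp add: propP_ccode)
  have "c * (t - 1) + t \<le> l"
    using \<open>t \<le> r\<close> \<open>l = c * (t - 1) + r\<close> by simp
  then have fp: "frameproof c l (insert (replicate l (sp, None)) ?C')"
    using frameproof_insert_replicate[OF P] code \<open>t > 0\<close> by (simp add: is_code_def)
  moreover have "frameproof c l ?C'"
    using frameproof_subset[OF fp subset_insertI] .
  ultimately show ?thesis
    using code P by (auto simp: frameproof_code_def is_code_def)
qed

end
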